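(* Let $p\ge 7$ be a prime. Then $$\sum_{1\le i<j<k\le p-1}\frac{1}{i^2jk}\equiv \sum_{1\le i<j<k\le p-1}\frac{1}{ijk^2}\equiv -\frac{1}{2}\sum_{1\le i<j<k\le p-1}\frac{1}{ij^2k}\pmod{p}.$$
   Context: Sums are over integers $i,j,k$. Congruences modulo $p$ are taken in the ring of rationals with denominators not divisible by $p$. *)

theory Defs
  imports Complex_Main "HOL-Computational_Algebra.Primes"
begin

text \<open>Congruence modulo p in the ring Z_(p) of rationals whose denominators are
  not divisible by p: x and y are congruent if their difference is of the form
  a/b with integers a, b, where p divides a and p does not divide b.\<close>
definition rat_cong :: "rat \<Rightarrow> rat \<Rightarrow> int \<Rightarrow> bool" where
  "rat_cong x y p \<longleftrightarrow> (\<exists>a b. b \<noteq> 0 \<and> \<not> p dvd b \<and> p dvd a \<and> x - y = of_int a / of_int b)"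

end

theory Submission
  imports Defs "HOL-Number_Theory.Cong"
begin

(* Write A, B, C for the sums of 1/(i^2 j k), 1/(i j k^2) and 1/(i j^2 k)
   over 1 <= i < j < k <= p-1, and P_m for the power sum of 1/i^m over 1 <= i <= p-1.
   (1) The reflection (i,j,k) |-> (p-k, p-j, p-i) permutes the index set and turns
       each term of A into a term congruent to the corresponding term of B, so A == B.
   (2) The symmetric-function identity 2(A+B+C) = P_2 P_1^2 - 2 P_3 P_1 - P_2^2 + 2 P_4
       holds for arbitrary x_i in place of 1/i; it is proved by induction on the index
       set, adding a new largest index at each step.
   (3) P_m == 0 mod p whenever c^m =/= 1 mod p for some unit c, since i |-> c i mod p
       permutes the nonzero residues; c = 2 covers m = 1, 2, 4 when p >= 7, because
       p does not divide 1, 3 or 15.  Hence A+B+C == 0.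
   Then B + C/2 = (A+B+C)/2 - (A-B)/2 == 0.  The file first develops the ring Z_(p) of
   p-integral rationals and its ideal pZ_(p), in which the congruences live, then the
   combinatorial identity (2), then facts (3) and (1), and finally the theorem. *)

section \<open>p-integral rationals\<close>

definition p_integral :: "int \<Rightarrow> rat \<Rightarrow> bool" where
  "p_integral p x \<longleftrightarrow> (\<exists>a b. \<not> p dvd b \<and> x = of_int a / of_int b)"

definition p_divisible :: "int \<Rightarrow> rat \<Rightarrow> bool" where
  "p_divisible p x \<longleftrightarrow> rat_cong x 0 p"

lemma rat_cong_iff_p_divisible: "rat_cong x y p \<longleftrightarrow> p_divisible p (x - y)"
  unfolding p_divisible_def rat_cong_def by simp

lemma p_integral_frac: "\<not> p dvd b \<Longrightarrow> p_integral p (of_int a / of_int b)"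
  unfolding p_integral_def by blast

lemma p_integral_of_int: "prime p \<Longrightarrow> p_integral p (of_int a)"
  using p_integral_frac[of p 1 a] not_prime_unit[of p] by (metis div_by_1 of_int_1)

lemma p_integral_half: "p > 2 \<Longrightarrow> p_integral (int p) (1 / 2)"
  using p_integral_frac[of "int p" 2 1] zdvd_imp_le[of "int p" 2] by fastforce

lemma p_integral_add:
  assumes "prime p" "p_integral p x" "p_integral p y"
  shows "p_integral p (x + y)"
proof -
  obtain a b c d where "\<not> p dvd b" "\<not> p dvd d" "x = of_int a / of_int b" "y = of_int c / of_int d"
    using assms(2,3) unfolding p_integral_def by blast
  moreover from this have "b \<noteq> 0" "d \<noteq> 0" by auto
  ultimately have "x + y = of_int (a * d + c * b) / of_int (b * d)" "\<not> p dvd b * d"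
    using assms(1) by (simp_all add: field_simps prime_dvd_mult_iff)
  then show ?thesis using p_integral_frac by metis
qed

lemma p_integral_mult:
  assumes "prime p" "p_integral p x" "p_integral p y"
  shows "p_integral p (x * y)"
proof -
  obtain a b c d where "\<not> p dvd b" "\<not> p dvd d" "x = of_int a / of_int b" "y = of_int c / of_int d"
    using assms(2,3) unfolding p_integral_def by blast
  then have "x * y = of_int (a * c) / of_int (b * d)" "\<not> p dvd b * d"
    using assms(1) by (simp_all add: prime_dvd_mult_iff)
  then show ?thesis using p_integral_frac by metis
qed

lemma p_integral_sum:
  "prime p \<Longrightarrow> (\<And>x. x \<in> A \<Longrightarrow> p_integral p (f x)) \<Longrightarrow> p_integral p (sum f A)"
  by (induction A rule: infinite_finite_induct)
     (auto simp: p_integral_add p_integral_of_int[of p 0, simplified])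

text \<open>Divisibility by p in Z_(p) means that the quotient by p is still p-integral;
  this reduces all closure properties of pZ_(p) to those of Z_(p).\<close>
lemma p_divisible_iff:
  assumes "p \<noteq> 0"
  shows "p_divisible p x \<longleftrightarrow> p_integral p (x / of_int p)"
proof
  assume "p_divisible p x"
  then obtain a b where "\<not> p dvd b" "p dvd a" "x = of_int a / of_int b"
    unfolding p_divisible_def rat_cong_def by auto
  moreover from this obtain c where "a = p * c" by blast
  ultimately have "x / of_int p = of_int c / of_int b" "\<not> p dvd b"
    using assms by simp_all
  then show "p_integral p (x / of_int p)" using p_integral_frac by metis
next
  assume "p_integral p (x / of_int p)"
  then obtain a b where "\<not> p dvd b" "x / of_int p = of_int a / of_int b"
    unfolding p_integral_def by blast
  moreover from this have "x = of_int (p * a) / of_int b" using assms by (simp add: field_simps)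
  ultimately show "p_divisible p x"
    unfolding p_divisible_def rat_cong_def by (metis diff_zero dvd_0_right dvd_triv_left)
qed

lemma p_divisible_add:
  assumes "prime p" "p_divisible p x" "p_divisible p y"
  shows "p_divisible p (x + y)"
  using assms p_integral_add[of p "x / of_int p" "y / of_int p"]
  by (simp add: p_divisible_iff add_divide_distrib)

lemma p_divisible_mult:
  assumes "prime p" "p_integral p x" "p_divisible p y"
  shows "p_divisible p (x * y)"
  using assms p_integral_mult[of p x "y / of_int p"] by (simp add: p_divisible_iff)

lemma p_divisible_diff:
  assumes "prime p" "p_divisible p x" "p_divisible p y"
  shows "p_divisible p (x - y)"
  using p_divisible_add[OF assms(1,2) p_divisible_mult[OF assms(1) p_integral_of_int[OF assms(1), of "-1"] assms(3)]]
  by simp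

lemma p_divisible_0: "prime p \<Longrightarrow> p_divisible p 0"
  using p_integral_of_int[of p 0] by (simp add: p_divisible_iff)

lemma p_divisible_sum:
  "prime p \<Longrightarrow> (\<And>x. x \<in> A \<Longrightarrow> p_divisible p (f x)) \<Longrightarrow> p_divisible p (sum f A)"
  by (induction A rule: infinite_finite_induct) (auto simp: p_divisible_add p_divisible_0)

section \<open>An identity for sums over increasing triples\<close>

definition increasing_pairs :: "'a::linorder set \<Rightarrow> ('a \<times> 'a) set" where
  "increasing_pairs U = {(i, j). i \<in> U \<and> j \<in> U \<and> i < j}"

definition increasing_triples :: "'a::linorder set \<Rightarrow> ('a \<times> 'a \<times> 'a) set" where
  "increasing_triples U = {(i, j, k). i \<in> U \<and> j \<in> U \<and> k \<in> U \<and> i < j \<and> j < k}"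

definition power_sum :: "'a set \<Rightarrow> ('a \<Rightarrow> 'b::comm_ring_1) \<Rightarrow> nat \<Rightarrow> 'b" where
  "power_sum U x m = (\<Sum>i\<in>U. x i ^ m)"

lemma power_sum_insert:
  "finite U \<Longrightarrow> b \<notin> U \<Longrightarrow> power_sum (insert b U) x m = power_sum U x m + x b ^ m"
  by (simp add: power_sum_def)

lemma finite_increasing_pairs: "finite U \<Longrightarrow> finite (increasing_pairs U)"
  by (rule finite_subset[of _ "U \<times> U"]) (auto simp: increasing_pairs_def)

lemma sum_increasing_pairs_insert:
  assumes "finite U" "\<forall>a\<in>U. a < b"
  shows "(\<Sum>(i, j)\<in>increasing_pairs (insert b U). f i j)
       = (\<Sum>(i, j)\<in>increasing_pairs U. f i j) + (\<Sum>i\<in>U. f i b)"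
proof -
  have "increasing_pairs (insert b U) = increasing_pairs U \<union> (\<lambda>i. (i, b)) ` U"
    using assms(2) unfolding increasing_pairs_def by auto
  moreover have "increasing_pairs U \<inter> (\<lambda>i. (i, b)) ` U = {}"
    using assms(2) unfolding increasing_pairs_def by auto
  ultimately show ?thesis
    using assms(1) finite_increasing_pairs[OF assms(1)]
    by (simp add: sum.union_disjoint sum.reindex inj_on_def)
qed

lemma sum_increasing_triples_insert:
  assumes "finite U" "\<forall>a\<in>U. a < b"
  shows "(\<Sum>(i, j, k)\<in>increasing_triples (insert b U). f i j k)
       = (\<Sum>(i, j, k)\<in>increasing_triples U. f i j k) + (\<Sum>(i, j)\<in>increasing_pairs U. f i j b)"
proof -
  have "increasing_triples (insert b U)
      = increasing_triples U \<union> (\<lambda>(i, j). (i, j, b)) ` increasing_pairs U"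
    using assms(2) unfolding increasing_triples_def increasing_pairs_def by auto
  moreover have "increasing_triples U \<inter> (\<lambda>(i, j). (i, j, b)) ` increasing_pairs U = {}"
    using assms(2) unfolding increasing_triples_def increasing_pairs_def by auto
  moreover have "finite (increasing_triples U)"
    by (rule finite_subset[of _ "U \<times> U \<times> U"]) (auto simp: increasing_triples_def assms(1))
  ultimately show ?thesis
    using finite_increasing_pairs[OF assms(1)]
    by (simp add: sum.union_disjoint sum.reindex inj_on_def prod_eq_iff case_prod_beta)
qed

lemma increasing_pairs_e2:
  fixes x :: "'a::linorder \<Rightarrow> 'b::comm_ring_1"
  assumes "finite U"
  shows "2 * (\<Sum>(i, j)\<in>increasing_pairs U. x i * x j)
       = power_sum U x 1 ^ 2 - power_sum U x 2"
  using assms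
proof (induction U rule: finite_linorder_max_induct)
  case empty
  then show ?case by (simp add: increasing_pairs_def power_sum_def)
next
  case (insert b U)
  have "b \<notin> U" using insert.hyps(2) by blast
  have "(\<Sum>i\<in>U. x i * x b) = power_sum U x 1 * x b"
    by (simp add: power_sum_def sum_distrib_right)
  then show ?case
    using insert sum_increasing_pairs_insert[OF insert.hyps(1,2), of "\<lambda>i j. x i * x j"]
    by (simp add: power_sum_insert[OF insert.hyps(1) \<open>b \<notin> U\<close>] algebra_simps power2_eq_square)
qed

lemma increasing_pairs_m21:
  fixes x :: "'a::linorder \<Rightarrow> 'b::comm_ring_1"
  assumes "finite U"
  shows "(\<Sum>(i, j)\<in>increasing_pairs U. x i ^ 2 * x j + x i * x j ^ 2)
       = power_sum U x 2 * power_sum U x 1 - power_sum U x 3"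
  using assms
proof (induction U rule: finite_linorder_max_induct)
  case empty
  then show ?case by (simp add: increasing_pairs_def power_sum_def)
next
  case (insert b U)
  have "b \<notin> U" using insert.hyps(2) by blast
  have "(\<Sum>i\<in>U. x i ^ 2 * x b + x i * x b ^ 2) = power_sum U x 2 * x b + power_sum U x 1 * x b ^ 2"
    by (simp add: power_sum_def sum.distrib sum_distrib_right)
  then show ?case
    using insert sum_increasing_pairs_insert[OF insert.hyps(1,2), of "\<lambda>i j. x i ^ 2 * x j + x i * x j ^ 2"]
    by (simp add: power_sum_insert[OF insert.hyps(1) \<open>b \<notin> U\<close>] algebra_simps power2_eq_square
        power3_eq_cube)
qed

lemma increasing_triples_m211:
  fixes x :: "'a::linorder \<Rightarrow> 'b::comm_ring_1"
  assumes "finite U"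
  shows "2 * (\<Sum>(i, j, k)\<in>increasing_triples U.
                 x i ^ 2 * x j * x k + x i * x j ^ 2 * x k + x i * x j * x k ^ 2)
       = power_sum U x 2 * power_sum U x 1 ^ 2 - 2 * power_sum U x 3 * power_sum U x 1
         - power_sum U x 2 ^ 2 + 2 * power_sum U x 4"
  using assms
proof (induction U rule: finite_linorder_max_induct)
  case empty
  have "increasing_triples ({} :: 'a set) = {}" by (auto simp: increasing_triples_def)
  then show ?case by (simp add: power_sum_def)
next
  case (insert b U)
  have "b \<notin> U" using insert.hyps(2) by blast
  define P where "P = power_sum U x"
  define y where "y = x b"
  define m211 where "m211 = (\<Sum>(i, j, k)\<in>increasing_triples U.
                 x i ^ 2 * x j * x k + x i * x j ^ 2 * x k + x i * x j * x k ^ 2)"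
  define m21 where "m21 = (\<Sum>(i, j)\<in>increasing_pairs U. x i ^ 2 * x j + x i * x j ^ 2)"
  define e2 where "e2 = (\<Sum>(i, j)\<in>increasing_pairs U. x i * x j)"
  have "(\<Sum>(i, j, k)\<in>increasing_triples (insert b U).
                 x i ^ 2 * x j * x k + x i * x j ^ 2 * x k + x i * x j * x k ^ 2)
      = m211 + (\<Sum>(i, j)\<in>increasing_pairs U.
                 x i ^ 2 * x j * y + x i * x j ^ 2 * y + x i * x j * y ^ 2)"
    unfolding m211_def y_def by (rule sum_increasing_triples_insert[OF insert.hyps(1,2)])
  also have "\<dots> = m211 + m21 * y + e2 * y ^ 2"
    unfolding m21_def e2_def
    by (simp add: sum_distrib_left sum_distrib_right sum.distrib case_prod_beta algebra_simps)
  finally have "2 * (\<Sum>(i, j, k)\<in>increasing_triples (insert b U).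
                 x i ^ 2 * x j * x k + x i * x j ^ 2 * x k + x i * x j * x k ^ 2)
      = 2 * m211 + 2 * y * m21 + y ^ 2 * (2 * e2)"
    by (simp add: algebra_simps)
  also have "\<dots> = P 2 * P 1 ^ 2 - 2 * P 3 * P 1 - P 2 ^ 2 + 2 * P 4
      + 2 * y * (P 2 * P 1 - P 3) + y ^ 2 * (P 1 ^ 2 - P 2)"
    using insert.IH increasing_pairs_e2[OF insert.hyps(1), of x]
      increasing_pairs_m21[OF insert.hyps(1), of x]
    unfolding m211_def m21_def e2_def P_def by simp
  also have "\<dots> = (P 2 + y ^ 2) * (P 1 + y) ^ 2 - 2 * (P 3 + y ^ 3) * (P 1 + y)
      - (P 2 + y ^ 2) ^ 2 + 2 * (P 4 + y ^ 4)"
    by (simp add: power2_eq_square power3_eq_cube power4_eq_xxxx algebra_simps)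
  finally show ?case
    by (simp add: power_sum_insert[OF insert.hyps(1) \<open>b \<notin> U\<close>] P_def y_def)
qed

section \<open>Congruences for reciprocals modulo a prime\<close>

lemma p_divisible_reciprocal_diff:
  fixes a b p :: nat
  assumes "[a = b] (mod p)" "\<not> p dvd a" "\<not> p dvd b" "prime p"
  shows "p_divisible (int p) (1 / of_nat a - 1 / of_nat b)"
proof -
  have "a \<noteq> 0" "b \<noteq> 0" using assms(2,3) dvd_0_right by metis+
  then have "1 / of_nat a - 1 / of_nat b = (of_int (int b - int a) / of_int (int (a * b)) :: rat)"
    by (simp add: field_simps)
  moreover have "\<not> int p dvd int (a * b)"
    using assms(2-4) by (simp add: prime_dvd_mult_iff)
  moreover have "int p dvd int b - int a"
    using assms(1) cong_sym cong_iff_dvd_diff cong_int_iff by blast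
  ultimately show ?thesis
    unfolding p_divisible_def rat_cong_def by (metis diff_zero dvd_0_right)
qed

lemma not_dvd_below_prime: "prime p \<Longrightarrow> i \<in> {1..p-1} \<Longrightarrow> \<not> p dvd (i::nat)"
  by (auto dest: dvd_imp_le)

lemma mult_mod_permutes_residues:
  fixes p c :: nat
  assumes "prime p" "\<not> p dvd c"
  shows "bij_betw (\<lambda>i. c * i mod p) {1..p-1} {1..p-1}"
proof -
  have p1: "p > 1" using assms(1) prime_gt_1_nat by blast
  have inj: "inj_on (\<lambda>i. c * i mod p) {1..p-1}"
  proof (rule inj_onI)
    fix i j assume ij: "i \<in> {1..p-1}" "j \<in> {1..p-1}" "c * i mod p = c * j mod p"
    have "coprime c p" using assms prime_imp_coprime coprime_commute by blast
    then have "[i = j] (mod p)" using ij(3) cong_mult_lcancel_nat unfolding cong_def by blast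
    moreover have "i < p" "j < p" using ij(1,2) p1 by auto
    ultimately show "i = j" by (simp add: cong_def)
  qed
  have "c * i mod p \<in> {1..p-1}" if "i \<in> {1..p-1}" for i
  proof -
    have "\<not> p dvd c * i"
      using assms not_dvd_below_prime[OF assms(1) that] prime_dvd_mult_iff by blast
    moreover have "c * i mod p < p" using p1 by simp
    ultimately show ?thesis by (simp add: dvd_eq_mod_eq_0)
  qed
  then have "(\<lambda>i. c * i mod p) ` {1..p-1} = {1..p-1}"
    using endo_inj_surj[OF _ _ inj] by blast
  then show ?thesis using inj by (simp add: bij_betw_def)
qed

text \<open>The power sum of the reciprocals 1, 1/2, ..., 1/(p-1) vanishes modulo p as soon
  as some unit c has c^m different from 1 modulo p: substituting i by c i mod p
  multiplies the sum by 1/c^m.\<close>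
lemma power_sum_reciprocals_divisible:
  fixes p c m :: nat
  assumes "prime p" "\<not> p dvd c" "\<not> p dvd c ^ m - 1"
  shows "p_divisible (int p) (power_sum {1..p-1} (\<lambda>i. 1 / of_nat i :: rat) m)"
proof -
  define U where "U = {1..p-1}"
  define S where "S = power_sum U (\<lambda>i. 1 / of_nat i :: rat) m"
  have pr: "prime (int p)" using assms(1) by simp
  have "S = (\<Sum>i\<in>U. 1 / of_nat (c * i mod p) ^ m)"
    using sum.reindex_bij_betw[OF mult_mod_permutes_residues[OF assms(1,2)],
        of "\<lambda>i. 1 / of_nat i ^ m :: rat"]
    by (simp add: S_def U_def power_sum_def power_one_over)
  moreover have "p_divisible (int p) (\<Sum>i\<in>U. 1 / of_nat ((c * i mod p) ^ m) - 1 / of_nat ((c * i) ^ m) :: rat)"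
  proof (rule p_divisible_sum[OF pr])
    fix i assume "i \<in> U"
    then have "\<not> p dvd c * i"
      using assms not_dvd_below_prime[of p i] by (simp add: U_def prime_dvd_mult_iff)
    then have "\<not> p dvd (c * i) ^ m"
      using assms(1) prime_dvd_power by blast
    moreover have "[(c * i mod p) ^ m = (c * i) ^ m] (mod p)" by (simp add: cong_def power_mod)
    ultimately show "p_divisible (int p) (1 / of_nat ((c * i mod p) ^ m) - 1 / of_nat ((c * i) ^ m) :: rat)"
      using assms(1) p_divisible_reciprocal_diff by (metis cong_dvd_iff)
  qed
  moreover have "(\<Sum>i\<in>U. 1 / of_nat ((c * i) ^ m) :: rat) = S / of_nat c ^ m"
    by (simp add: S_def power_sum_def sum_divide_distrib power_one_over power_mult_distrib mult.commute)
  ultimately have diff: "p_divisible (int p) (S - S / of_nat c ^ m)"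
    by (simp add: sum_subtractf)
  define q where "q = (of_nat c ^ m :: rat)"
  have "c ^ m \<noteq> 1" using assms(3) by (metis diff_self_eq_0 dvd_0_right)
  moreover have "c \<noteq> 0" using assms(2) dvd_0_right by metis
  ultimately have "q \<noteq> 0" "q - 1 \<noteq> 0" "c ^ m \<ge> 1"
    unfolding q_def by (simp_all flip: of_nat_power)
  then have "S = q / (q - 1) * (S - S / q)"
    "q / (q - 1) = of_int (int (c ^ m)) / of_int (int (c ^ m - 1))"
    by (simp_all add: field_simps q_def of_nat_diff)
  moreover have "p_integral (int p) (of_int (int (c ^ m)) / of_int (int (c ^ m - 1)))"
    using assms(3) by (intro p_integral_frac) simp
  ultimately show ?thesis
    using p_divisible_mult[OF pr _ diff] by (metis S_def U_def q_def)
qed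

lemma power_sum_reciprocals_integral:
  fixes p m :: nat
  assumes "prime p"
  shows "p_integral (int p) (power_sum {1..p-1} (\<lambda>i. 1 / of_nat i :: rat) m)"
  unfolding power_sum_def
proof (rule p_integral_sum)
  show "prime (int p)" using assms by simp
  fix i assume "i \<in> {1..p-1}"
  then have "\<not> int p dvd int (i ^ m)"
    using assms not_dvd_below_prime[OF assms] prime_dvd_power by (metis int_dvd_int_iff)
  then show "p_integral (int p) ((1 / of_nat i) ^ m)"
    using p_integral_frac[of "int p" "int (i ^ m)" 1] by (simp add: power_one_over)
qed

section \<open>The two congruences\<close>

lemma reflection_permutes_triples:
  fixes n :: nat
  shows "bij_betw (\<lambda>(i, j, k). (n - k, n - j, n - i))
     (increasing_triples {1..n-1}) (increasing_triples {1..n-1})"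
  by (rule bij_betw_byWitness[where f' = "\<lambda>(i, j, k). (n - k, n - j, n - i)"])
     (auto simp: increasing_triples_def)

text \<open>Since p - i \<equiv> -i, the reflection of the term 1/(i^2 j k) is congruent to the
  term 1/(k^2 j i), which is the summand of the second sum at (i, j, k).\<close>
lemma reflected_term_congruent:
  fixes p i j k :: nat
  assumes "prime p" "i \<in> {1..p-1}" "j \<in> {1..p-1}" "k \<in> {1..p-1}"
  shows "p_divisible (int p)
           (1 / (of_nat (p - k) ^ 2 * of_nat (p - j) * of_nat (p - i))
            - 1 / (of_nat i * of_nat j * of_nat k ^ 2) :: rat)"
proof -
  have "i \<le> p" "j \<le> p" "k \<le> p" using assms(2-4) by auto
  have minus: "[int p - int x = - int x] (mod int p)" for x
    by (simp add: cong_iff_dvd_diff)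
  have "[(int p - int k) ^ 2 * (int p - int j) * (int p - int i)
          = (- int k) ^ 2 * (- int j) * (- int i)] (mod int p)"
    by (intro cong_mult cong_pow minus)
  moreover from \<open>i \<le> p\<close> \<open>j \<le> p\<close> \<open>k \<le> p\<close> have "int ((p - k) ^ 2 * (p - j) * (p - i))
      = (int p - int k) ^ 2 * (int p - int j) * (int p - int i)"
    by (simp add: of_nat_diff)
  moreover have "(- int k) ^ 2 * (- int j) * (- int i) = int (i * j * k ^ 2)"
    by (simp add: power2_eq_square)
  ultimately have "[int ((p - k) ^ 2 * (p - j) * (p - i)) = int (i * j * k ^ 2)] (mod int p)"
    by (simp add: mult_ac)
  then have "[(p - k) ^ 2 * (p - j) * (p - i) = i * j * k ^ 2] (mod p)"
    using cong_int_iff by blast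
  moreover have "\<not> p dvd i * j * k ^ 2"
    using assms not_dvd_below_prime[OF assms(1)] by (simp add: prime_dvd_mult_iff prime_dvd_power_iff)
  moreover have "\<not> p dvd (p - k) ^ 2 * (p - j) * (p - i)"
  proof -
    have "p - i \<in> {1..p-1}" "p - j \<in> {1..p-1}" "p - k \<in> {1..p-1}" using assms(2-4) by auto
    then show ?thesis
      using assms(1) not_dvd_below_prime[OF assms(1)] by (simp add: prime_dvd_mult_iff prime_dvd_power_iff)
  qed
  ultimately show ?thesis
    using p_divisible_reciprocal_diff[OF _ _ _ assms(1)] by fastforce
qed

lemma sum_i2jk_congruent_sum_ijk2:
  fixes p :: nat
  assumes "prime p"
  defines "T \<equiv> increasing_triples {1..p-1}"
  shows "p_divisible (int p)
           ((\<Sum>(i, j, k)\<in>T. 1 / (of_nat i ^ 2 * of_nat j * of_nat k :: rat))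
            - (\<Sum>(i, j, k)\<in>T. 1 / (of_nat i * of_nat j * of_nat k ^ 2)))"
proof -
  have "(\<Sum>(i, j, k)\<in>T. 1 / (of_nat i ^ 2 * of_nat j * of_nat k :: rat))
      = (\<Sum>(i, j, k)\<in>T. 1 / (of_nat (p - k) ^ 2 * of_nat (p - j) * of_nat (p - i)))"
    using sum.reindex_bij_betw[OF reflection_permutes_triples[of p],
        of "\<lambda>(i, j, k). 1 / (of_nat i ^ 2 * of_nat j * of_nat k :: rat)"]
    unfolding T_def by (simp add: case_prod_beta)
  moreover have "p_divisible (int p)
      (\<Sum>(i, j, k)\<in>T. 1 / (of_nat (p - k) ^ 2 * of_nat (p - j) * of_nat (p - i))
                    - 1 / (of_nat i * of_nat j * of_nat k ^ 2) :: rat)"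
    using assms(1) reflected_term_congruent[OF assms(1)]
    by (intro p_divisible_sum) (auto simp: T_def increasing_triples_def)
  ultimately show ?thesis by (simp add: sum_subtractf case_prod_beta)
qed

text \<open>Second congruence: the full symmetric sum over increasing triples of the monomials
  of type (2,1,1) in 1/i vanishes modulo p, by the power-sum identity, since P_1, P_2
  and P_4 vanish (2 is a unit whose powers 2, 4, 16 differ from 1 modulo p \<ge> 7).\<close>
lemma sum_m211_reciprocals_divisible:
  fixes p :: nat
  assumes "prime p" "p \<ge> 7"
  defines "T \<equiv> increasing_triples {1..p-1}"
  shows "p_divisible (int p)
           ((\<Sum>(i, j, k)\<in>T. 1 / (of_nat i ^ 2 * of_nat j * of_nat k :: rat))
            + (\<Sum>(i, j, k)\<in>T. 1 / (of_nat i * of_nat j * of_nat k ^ 2))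
            + (\<Sum>(i, j, k)\<in>T. 1 / (of_nat i * of_nat j ^ 2 * of_nat k)))"
proof -
  define x where "x = (\<lambda>i::nat. 1 / of_nat i :: rat)"
  define P where "P = power_sum {1..p-1} x"
  have pr: "prime (int p)" using assms(1) by simp
  have P_integral: "p_integral (int p) (P m)" for m
    unfolding P_def x_def using power_sum_reciprocals_integral[OF assms(1)] .
  have P_divisible: "p_divisible (int p) (P m)" if "m \<in> {1, 2, 4}" for m
  proof -
    have "\<not> p dvd 2 ^ m - 1"
    proof
      assume "p dvd 2 ^ m - 1"
      moreover have "2 ^ m - 1 \<in> {1, 3, 3 * 5 :: nat}" using that by auto
      ultimately have "p dvd 1 \<or> p dvd 3 \<or> p dvd 3 * 5" by auto
      then have "p dvd 3 \<or> p dvd 5"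
        using assms(1) prime_dvd_mult_iff[of p 3 5] by (auto simp del: mult_numeral_left_semiring_numeral)
      then show False using assms(2) by (auto dest: dvd_imp_le)
    qed
    moreover have "\<not> p dvd 2" using assms(2) by (auto dest: dvd_imp_le)
    ultimately show ?thesis
      unfolding P_def x_def using power_sum_reciprocals_divisible[OF assms(1)] by blast
  qed
  define m211 where "m211 =
    (\<Sum>(i, j, k)\<in>T. 1 / (of_nat i ^ 2 * of_nat j * of_nat k :: rat))
     + (\<Sum>(i, j, k)\<in>T. 1 / (of_nat i * of_nat j * of_nat k ^ 2))
     + (\<Sum>(i, j, k)\<in>T. 1 / (of_nat i * of_nat j ^ 2 * of_nat k))"
  have "2 * m211
      = 2 * (\<Sum>(i, j, k)\<in>T. x i ^ 2 * x j * x k + x i * x j ^ 2 * x k + x i * x j * x k ^ 2)"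
    by (simp add: m211_def x_def sum.distrib case_prod_beta power_one_over add_ac)
  also have "\<dots> = P 2 * P 1 ^ 2 - 2 * P 3 * P 1 - P 2 ^ 2 + 2 * P 4"
    unfolding T_def P_def by (rule increasing_triples_m211) simp
  finally have double: "2 * m211 = (P 2 * P 1) * P 1 - (2 * P 3) * P 1 - P 2 * P 2 + 2 * P 4"
    by (simp add: power2_eq_square mult_ac)
  have two: "p_integral (int p) 2"
    using p_integral_of_int[OF pr, of 2] by simp
  have "p_divisible (int p) (2 * m211)"
    unfolding double
    by (intro p_divisible_add[OF pr] p_divisible_diff[OF pr] p_divisible_mult[OF pr]
        p_integral_mult[OF pr] two P_integral P_divisible) simp_all
  moreover have "p_integral (int p) (1 / 2)" using p_integral_half assms(2) by simp
  ultimately have "p_divisible (int p) (1 / 2 * (2 * m211))"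
    using p_divisible_mult[OF pr] by blast
  then show ?thesis by (simp only: m211_def mult.assoc[symmetric]) simp
qed

theorem lemma2p7:
  fixes p :: nat
  assumes "prime p" and "p \<ge> 7"
  defines "T \<equiv> {(i::nat, j::nat, k::nat). 1 \<le> i \<and> i < j \<and> j < k \<and> k \<le> p - 1}"
  shows "rat_cong (\<Sum>(i, j, k)\<in>T. 1 / (of_nat i ^ 2 * of_nat j * of_nat k :: rat))
                  (\<Sum>(i, j, k)\<in>T. 1 / (of_nat i * of_nat j * of_nat k ^ 2 :: rat)) (int p)
       \<and> rat_cong (\<Sum>(i, j, k)\<in>T. 1 / (of_nat i * of_nat j * of_nat k ^ 2 :: rat))
                  (- (1/2) * (\<Sum>(i, j, k)\<in>T. 1 / (of_nat i * of_nat j ^ 2 * of_nat k :: rat))) (int p)"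
proof -
  have pr: "prime (int p)" using assms(1) by simp
  have T_eq: "T = increasing_triples {1..p-1}"
    unfolding T_def increasing_triples_def by auto
  define A B C where
    "A = (\<Sum>(i, j, k)\<in>T. 1 / (of_nat i ^ 2 * of_nat j * of_nat k :: rat))" and
    "B = (\<Sum>(i, j, k)\<in>T. 1 / (of_nat i * of_nat j * of_nat k ^ 2 :: rat))" and
    "C = (\<Sum>(i, j, k)\<in>T. 1 / (of_nat i * of_nat j ^ 2 * of_nat k :: rat))"
  have AB: "p_divisible (int p) (A - B)"
    using sum_i2jk_congruent_sum_ijk2[OF assms(1)] unfolding A_def B_def T_eq .
  have ABC: "p_divisible (int p) (A + B + C)"
    using sum_m211_reciprocals_divisible[OF assms(1,2)] unfolding A_def B_def C_def T_eq .
  have half: "p_integral (int p) (1 / 2)" using p_integral_half assms(2) by simp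
  have "B - (- (1/2) * C) = 1 / 2 * (A + B + C) - 1 / 2 * (A - B)"
    by (simp add: field_simps)
  moreover have "p_divisible (int p) (1 / 2 * (A + B + C) - 1 / 2 * (A - B))"
    using p_divisible_mult[OF pr half] AB ABC by (intro p_divisible_diff[OF pr]) simp_all
  ultimately show ?thesis
    using AB unfolding rat_cong_iff_p_divisible A_def B_def C_def by simp
qed

end
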